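(* Let $X$ and $Y$ be Banach spaces and $T\in B(X)$, $S\in B(Y)$ operators with $I_T=I_S$. Then there exist constants $M>0$ and $m\in\mathbb N$ such that for every $s$-function $s$, $$s_{m(n-1)+j}(T)\le M s_n(S)\quad\text{and}\quad s_{m(n-1)+j}(S)\le M s_n(T)$$ for all $n\in\mathbb N$ and all $j\in\{0,\ldots,m-1\}$ with $m(n-1)+j\ge 1$.
   Context: All Banach spaces are complex; $B(X,Y)$ denotes bounded linear operators. For $T\in B(X,Y)$ and Banach spaces $Z_1,Z_2$, $I_T(Z_1,Z_2)=\bigcup_{n\in\mathbb N}\{\sum_{j=1}^n R_jTR_j' : R_j\in B(Y,Z_2),\ R_j'\in B(Z_1,X)\}$ and $I_T=\bigcup_{Z_1,Z_2}I_T(Z_1,Z_2)$; $I_T=I_S$ means $I_T(Z_1,Z_2)=I_S(Z_1,Z_2)$ for all $Z_1,Z_2$. An $s$-function is a rule assigning to every operator $T\in B(X,Y)$ (for all Banach spaces $X,Y$) a sequence $(s_n(T))_{n\ge1}$ such that: (1) $\|T\|=s_1(T)\ge s_2(T)\ge\cdots\ge0$; (2) $s_{n+m-1}(S+T)\le s_n(S)+s_m(T)$ for all $m,n$ and $S,T\in B(X,Y)$; (3) $s_n(STR)\le\|S\|\|R\|s_n(T)$ for $T\in B(X,Y)$, $S\in B(Y,Z_2)$, $R\in B(Z_1,X)$; (4) $s_n(T)=0$ if $\mathrm{rank}\,T<n$; (5) $s_n(\mathrm{id}_{\ell^2_n})=1$, where $\ell^2_n$ is $\mathbb C^n$ with the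 Euclidean norm. *)

theory Defs
  imports "HOL-Analysis.Analysis"
begin

text \<open>The library only has real normed spaces; a complex Banach space is a real
Banach space with a compatible complex scalar multiplication.\<close>

class cbanach = banach +
  fixes scaleC :: "complex \<Rightarrow> 'a \<Rightarrow> 'a"
  assumes scaleC_of_real: "scaleC (of_real r) x = scaleR r x"
    and scaleC_add_right: "scaleC a (x + y) = scaleC a x + scaleC a y"
    and scaleC_add_left: "scaleC (a + b) x = scaleC a x + scaleC b x"
    and scaleC_scaleC: "scaleC a (scaleC b x) = scaleC (a * b) x"
    and scaleC_one: "scaleC 1 x = x"
    and norm_scaleC: "norm (scaleC a x) = cmod a * norm x"

definition bounded_clinear :: "('a::cbanach \<Rightarrow> 'b::cbanach) \<Rightarrow> bool" where
  "bounded_clinear f \<longleftrightarrow> bounded_linear f \<and> (\<forall>c x. f (scaleC c x) = scaleC c (f x))"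

definition cspan :: "'a::cbanach set \<Rightarrow> 'a set" where
  "cspan B = {(\<Sum>b\<in>F. scaleC (c b) b) | F c. finite F \<and> F \<subseteq> B}"

definition rank_less :: "('a::cbanach \<Rightarrow> 'b::cbanach) \<Rightarrow> nat \<Rightarrow> bool" where
  "rank_less T n \<longleftrightarrow> (\<exists>B. finite B \<and> card B < n \<and> range T \<subseteq> cspan B)"

definition opideal :: "('x::cbanach \<Rightarrow> 'y::cbanach) \<Rightarrow> ('z1::cbanach \<Rightarrow> 'z2::cbanach) set" where
  "opideal T = {(\<lambda>z. \<Sum>j<k. R j (T (R' j z))) | k R R'.
      1 \<le> (k::nat) \<and> (\<forall>j<k. bounded_clinear (R j) \<and> bounded_clinear (R' j))}"

definition sfun_single :: "(('x::cbanach \<Rightarrow> 'y::cbanach) \<Rightarrow> nat \<Rightarrow> real) \<Rightarrow> bool" where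
  "sfun_single s \<longleftrightarrow>
     (\<forall>T. bounded_clinear T \<longrightarrow>
        s T 1 = onorm T \<and> (\<forall>n\<ge>1. s T (Suc n) \<le> s T n) \<and> (\<forall>n\<ge>1. 0 \<le> s T n)
        \<and> (\<forall>n\<ge>1. rank_less T n \<longrightarrow> s T n = 0))
   \<and> (\<forall>S T n m. bounded_clinear S \<and> bounded_clinear T \<and> 1 \<le> n \<and> 1 \<le> m \<longrightarrow>
        s (\<lambda>x. S x + T x) (n + m - 1) \<le> s S n + s T m)"

text \<open>Axiom (3): s_n(S T R) \<le> \<parallel>S\<parallel> \<parallel>R\<parallel> s_n(T), for T in B(X,Y), R in B(Z1,X), S in B(Y,Z2);
here s is the s-function on B(X,Y) and s' the one on B(Z1,Z2).\<close>

definition sfun_comp ::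
  "(('x::cbanach \<Rightarrow> 'y::cbanach) \<Rightarrow> nat \<Rightarrow> real) \<Rightarrow> (('z1::cbanach \<Rightarrow> 'z2::cbanach) \<Rightarrow> nat \<Rightarrow> real) \<Rightarrow> bool" where
  "sfun_comp s s' \<longleftrightarrow>
     (\<forall>T (R :: 'z1 \<Rightarrow> 'x) (S :: 'y \<Rightarrow> 'z2) n.
        bounded_clinear T \<and> bounded_clinear R \<and> bounded_clinear S \<and> 1 \<le> n \<longrightarrow>
        s' (S \<circ> T \<circ> R) n \<le> onorm S * onorm R * s T n)"

text \<open>An s-function restricted to the four operator spaces B(X,X), B(X,Y), B(Y,X), B(Y,Y):
axioms (1),(2),(4) on each, and axiom (3) for all Z1, Z2, X', Y' among X, Y.\<close>

definition sfun2 ::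
  "(('a::cbanach \<Rightarrow> 'a) \<Rightarrow> nat \<Rightarrow> real) \<Rightarrow> (('a \<Rightarrow> 'b::cbanach) \<Rightarrow> nat \<Rightarrow> real) \<Rightarrow>
   (('b \<Rightarrow> 'a) \<Rightarrow> nat \<Rightarrow> real) \<Rightarrow> (('b \<Rightarrow> 'b) \<Rightarrow> nat \<Rightarrow> real) \<Rightarrow> bool" where
  "sfun2 sXX sXY sYX sYY \<longleftrightarrow>
     sfun_single sXX \<and> sfun_single sXY \<and> sfun_single sYX \<and> sfun_single sYY \<and>
     sfun_comp sXX sXX \<and> sfun_comp sXX sXY \<and> sfun_comp sXX sYX \<and> sfun_comp sXX sYY \<and>
     sfun_comp sXY sXX \<and> sfun_comp sXY sXY \<and> sfun_comp sXY sYX \<and> sfun_comp sXY sYY \<and>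
     sfun_comp sYX sXX \<and> sfun_comp sYX sXY \<and> sfun_comp sYX sYX \<and> sfun_comp sYX sYY \<and>
     sfun_comp sYY sXX \<and> sfun_comp sYY sXY \<and> sfun_comp sYY sYX \<and> sfun_comp sYY sYY"

end

theory Submission
  imports Defs
begin

text \<open>If \<open>S \<in> I_T\<close>, write \<open>S = R_1 T R_1' + \<dots> + R_k T R_k'\<close>. Applying the additivity
axiom \<open>k - 1\<close> times, always with the same index \<open>n\<close> on the new summand, gives
\<open>s_{k(n-1)+1}(S) \<le> \<Sum>_j s_n(R_j T R_j')\<close>, and the ideal property bounds each summand by
\<open>\<parallel>R_j\<parallel> \<parallel>R_j'\<parallel> s_n(T)\<close>. Doing this in both directions and taking \<open>m\<close> larger than both
values of \<open>k\<close>, monotonicity of \<open>s\<close> absorbs the offset \<open>j\<close>.\<close>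

lemma scaleC_zero_right: "scaleC c (0::'a::cbanach) = 0"
proof -
  have "scaleC c (0::'a) = scaleC c 0 + scaleC c 0"
    using scaleC_add_right[of c "0::'a" 0] by simp
  then show ?thesis by simp
qed

lemma bounded_clinear_zero: "bounded_clinear (\<lambda>_::'a::cbanach. 0::'b::cbanach)"
  unfolding bounded_clinear_def by (simp add: bounded_linear_zero scaleC_zero_right)

lemma bounded_clinear_id: "bounded_clinear (id :: 'a::cbanach \<Rightarrow> 'a)"
  unfolding bounded_clinear_def by (simp add: bounded_linear_ident id_def)

lemma bounded_clinear_add:
  "bounded_clinear f \<Longrightarrow> bounded_clinear g \<Longrightarrow> bounded_clinear (\<lambda>x. f x + g x)"
  unfolding bounded_clinear_def by (auto intro: bounded_linear_add simp: scaleC_add_right)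

lemma bounded_clinear_compose:
  "bounded_clinear f \<Longrightarrow> bounded_clinear g \<Longrightarrow> bounded_clinear (f \<circ> g)"
  unfolding bounded_clinear_def by (auto simp: o_def intro: bounded_linear_compose)

lemma bounded_clinear_sum:
  assumes "finite J" and "\<And>j. j \<in> J \<Longrightarrow> bounded_clinear (A j)"
  shows "bounded_clinear (\<lambda>z. \<Sum>j\<in>J. A j z)"
  using assms by (induction J rule: finite_induct)
    (simp_all add: bounded_clinear_zero bounded_clinear_add)

lemma onorm_nonneg_clinear: "bounded_clinear f \<Longrightarrow> 0 \<le> onorm f"
  unfolding bounded_clinear_def by (simp add: onorm_pos_le)

lemma opideal_self: "bounded_clinear T \<Longrightarrow> T \<in> opideal T"
  unfolding opideal_def
  by (auto intro!: exI[of _ 1] exI[of _ "\<lambda>_. id"] simp: bounded_clinear_id)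

lemma sfun_single_nonneg: "sfun_single s \<Longrightarrow> bounded_clinear A \<Longrightarrow> 1 \<le> n \<Longrightarrow> 0 \<le> s A n"
  unfolding sfun_single_def by blast

lemma sfun_single_add:
  assumes "sfun_single s" "bounded_clinear F" "bounded_clinear G" "1 \<le> p" "1 \<le> q"
  shows "s (\<lambda>x. F x + G x) (p + q - 1) \<le> s F p + s G q"
  using assms unfolding sfun_single_def by blast

lemma sfun_single_antimono:
  assumes "sfun_single s" "bounded_clinear A" "1 \<le> p" "p \<le> q"
  shows "s A q \<le> s A p"
  using assms(4)
proof (induction q rule: dec_induct)
  case (step q)
  have "s A (Suc q) \<le> s A q"
    using assms(1-3) step.hyps(1) unfolding sfun_single_def by auto
  with step.IH show ?case by linarith
qed simp

lemma sfun_single_sum: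
  assumes s: "sfun_single s" and A: "\<And>j. j < k \<Longrightarrow> bounded_clinear (A j)"
    and "1 \<le> k" "1 \<le> n"
  shows "s (\<lambda>z. \<Sum>j<k. A j z) (k * (n - 1) + 1) \<le> (\<Sum>j<k. s (A j) n)"
  using \<open>1 \<le> k\<close> A
proof (induction k rule: nat_induct_at_least)
  case base
  then show ?case using \<open>1 \<le> n\<close> by simp
next
  case (Suc k)
  have partial: "bounded_clinear (\<lambda>z. \<Sum>j<k. A j z)"
    using Suc.prems by (intro bounded_clinear_sum) auto
  have "s (\<lambda>z. (\<Sum>j<k. A j z) + A k z) ((k * (n - 1) + 1) + n - 1)
      \<le> s (\<lambda>z. \<Sum>j<k. A j z) (k * (n - 1) + 1) + s (A k) n"
    using sfun_single_add[OF s partial _ _ \<open>1 \<le> n\<close>, of "A k" "k * (n - 1) + 1"] Suc.prems by simp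
  moreover have "(k * (n - 1) + 1) + n - 1 = Suc k * (n - 1) + 1"
    using \<open>1 \<le> n\<close> by simp
  ultimately have "s (\<lambda>z. \<Sum>j<Suc k. A j z) (Suc k * (n - 1) + 1)
      \<le> s (\<lambda>z. \<Sum>j<k. A j z) (k * (n - 1) + 1) + s (A k) n"
    by (simp only: sum.lessThan_Suc)
  also have "\<dots> \<le> (\<Sum>j<k. s (A j) n) + s (A k) n"
    using Suc.IH Suc.prems by simp
  finally show ?case by simp
qed

lemma sfun_le_of_opideal:
  fixes T :: "'x::cbanach \<Rightarrow> 'y::cbanach" and S :: "'z1::cbanach \<Rightarrow> 'z2::cbanach"
  assumes T: "bounded_clinear T" and "S \<in> opideal T"
  obtains C k where "0 \<le> C" "1 \<le> k"
    "\<And>s (s' :: ('z1 \<Rightarrow> 'z2) \<Rightarrow> nat \<Rightarrow> real) n. sfun_single s' \<Longrightarrow> sfun_comp s s' \<Longrightarrow> 1 \<le> n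
       \<Longrightarrow> s' S (k * (n - 1) + 1) \<le> C * s T n"
proof -
  obtain k and R :: "nat \<Rightarrow> 'y \<Rightarrow> 'z2" and R' :: "nat \<Rightarrow> 'z1 \<Rightarrow> 'x"
    where S: "S = (\<lambda>z. \<Sum>j<k. R j (T (R' j z)))" and k: "1 \<le> k"
      and R: "\<And>j. j < k \<Longrightarrow> bounded_clinear (R j) \<and> bounded_clinear (R' j)"
    using \<open>S \<in> opideal T\<close> unfolding opideal_def by blast
  define C where "C = (\<Sum>j<k. onorm (R j) * onorm (R' j))"
  have C: "0 \<le> C"
    unfolding C_def using R by (intro sum_nonneg mult_nonneg_nonneg) (auto intro: onorm_nonneg_clinear)
  have bound: "s' S (k * (n - 1) + 1) \<le> C * s T n"
    if s': "sfun_single s'" and comp: "sfun_comp s s'" and n: "1 \<le> n"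
    for s :: "('x \<Rightarrow> 'y) \<Rightarrow> nat \<Rightarrow> real" and s' n
  proof -
    have terms: "bounded_clinear (R j \<circ> T \<circ> R' j)" if "j < k" for j
      using R[OF that] T by (auto intro: bounded_clinear_compose)
    have "s' S (k * (n - 1) + 1) \<le> (\<Sum>j<k. s' (R j \<circ> T \<circ> R' j) n)"
      using sfun_single_sum[OF s' terms k n] by (simp add: S)
    also have "\<dots> \<le> (\<Sum>j<k. onorm (R j) * onorm (R' j) * s T n)"
      using comp R T n unfolding sfun_comp_def by (intro sum_mono) auto
    also have "\<dots> = C * s T n"
      unfolding C_def by (simp add: sum_distrib_right)
    finally show ?thesis .
  qed
  show ?thesis using C k bound by (rule that)
qed

lemma block_index_le:
  fixes k m n j :: nat
  assumes "k < m" "1 \<le> n" "1 \<le> m * (n - 1) + j"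
  shows "k * (n - 1) + 1 \<le> m * (n - 1) + j"
proof (cases "n = 1")
  case False
  then have "k * (n - 1) + 1 \<le> (k + 1) * (n - 1)"
    using \<open>1 \<le> n\<close> by simp
  also have "\<dots> \<le> m * (n - 1)"
    using \<open>k < m\<close> by (intro mult_right_mono) auto
  finally show ?thesis by simp
qed (use assms in simp)

lemma sfun_le_of_opideal_at_blocks:
  fixes T :: "'x::cbanach \<Rightarrow> 'y::cbanach" and S :: "'z1::cbanach \<Rightarrow> 'z2::cbanach"
  assumes T: "bounded_clinear T" and S: "bounded_clinear S" and "S \<in> opideal T"
  obtains C k where "0 \<le> C"
    "\<And>s (s' :: ('z1 \<Rightarrow> 'z2) \<Rightarrow> nat \<Rightarrow> real) M m n j.
       sfun_single s \<Longrightarrow> sfun_single s' \<Longrightarrow> sfun_comp s s' \<Longrightarrow> C \<le> M \<Longrightarrow> k < m \<Longrightarrow> 1 \<le> n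
       \<Longrightarrow> 1 \<le> m * (n - 1) + j \<Longrightarrow> s' S (m * (n - 1) + j) \<le> M * s T n"
proof -
  obtain C k where C: "0 \<le> C" and bound: "\<And>s (s' :: ('z1 \<Rightarrow> 'z2) \<Rightarrow> nat \<Rightarrow> real) n.
      sfun_single s' \<Longrightarrow> sfun_comp s s' \<Longrightarrow> 1 \<le> n \<Longrightarrow> s' S (k * (n - 1) + 1) \<le> C * s T n"
    by (rule sfun_le_of_opideal[OF T \<open>S \<in> opideal T\<close>]) (rule that)
  have block_bound: "s' S (m * (n - 1) + j) \<le> M * s T n"
    if s: "sfun_single s" and s': "sfun_single s'" and comp: "sfun_comp s s'" and "C \<le> M"
      and "k < m" and n: "1 \<le> n" and "1 \<le> m * (n - 1) + j"
    for s and s' :: "('z1 \<Rightarrow> 'z2) \<Rightarrow> nat \<Rightarrow> real" and M m n j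
  proof -
    have "s' S (m * (n - 1) + j) \<le> s' S (k * (n - 1) + 1)"
      using sfun_single_antimono[OF s' S _ block_index_le] that by simp
    also have "\<dots> \<le> C * s T n"
      using bound[OF s' comp n] .
    also have "\<dots> \<le> M * s T n"
      using sfun_single_nonneg[OF s T n] \<open>C \<le> M\<close> by (rule mult_right_mono[rotated])
    finally show ?thesis .
  qed
  show ?thesis using C block_bound by (rule that)
qed

theorem proposition3p2:
  fixes T :: "'a::cbanach \<Rightarrow> 'a" and S :: "'b::cbanach \<Rightarrow> 'b"
  assumes "bounded_clinear T" and "bounded_clinear S"
    and "(opideal T :: ('a \<Rightarrow> 'a) set) = opideal S"
    and "(opideal T :: ('a \<Rightarrow> 'b) set) = opideal S"
    and "(opideal T :: ('b \<Rightarrow> 'a) set) = opideal S"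
    and "(opideal T :: ('b \<Rightarrow> 'b) set) = opideal S"
  shows "\<exists>M>0. \<exists>m::nat. 1 \<le> m \<and>
    (\<forall>(sXX :: ('a \<Rightarrow> 'a) \<Rightarrow> nat \<Rightarrow> real) (sXY :: ('a \<Rightarrow> 'b) \<Rightarrow> nat \<Rightarrow> real)
       (sYX :: ('b \<Rightarrow> 'a) \<Rightarrow> nat \<Rightarrow> real) (sYY :: ('b \<Rightarrow> 'b) \<Rightarrow> nat \<Rightarrow> real).
       sfun2 sXX sXY sYX sYY \<longrightarrow>
       (\<forall>n\<ge>1. \<forall>j<m. 1 \<le> m * (n - 1) + j \<longrightarrow>
          sXX T (m * (n - 1) + j) \<le> M * sYY S n \<and>
          sYY S (m * (n - 1) + j) \<le> M * sXX T n))"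
proof -
  have "S \<in> (opideal T :: ('b \<Rightarrow> 'b) set)"
    using opideal_self[OF assms(2)] assms(6) by simp
  have "T \<in> (opideal S :: ('a \<Rightarrow> 'a) set)"
    using opideal_self[OF assms(1)] assms(3) by simp
  obtain C1 k1 where "0 \<le> C1"
    and S_le: "\<And>s (s' :: ('b \<Rightarrow> 'b) \<Rightarrow> nat \<Rightarrow> real) M m n j. sfun_single s \<Longrightarrow> sfun_single s'
      \<Longrightarrow> sfun_comp s s' \<Longrightarrow> C1 \<le> M \<Longrightarrow> k1 < m \<Longrightarrow> 1 \<le> n \<Longrightarrow> 1 \<le> m * (n - 1) + j
      \<Longrightarrow> s' S (m * (n - 1) + j) \<le> M * s T n"
    by (rule sfun_le_of_opideal_at_blocks[OF assms(1,2) \<open>S \<in> opideal T\<close>]) (rule that)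
  obtain C2 k2 where "0 \<le> C2"
    and T_le: "\<And>s (s' :: ('a \<Rightarrow> 'a) \<Rightarrow> nat \<Rightarrow> real) M m n j. sfun_single s \<Longrightarrow> sfun_single s'
      \<Longrightarrow> sfun_comp s s' \<Longrightarrow> C2 \<le> M \<Longrightarrow> k2 < m \<Longrightarrow> 1 \<le> n \<Longrightarrow> 1 \<le> m * (n - 1) + j
      \<Longrightarrow> s' T (m * (n - 1) + j) \<le> M * s S n"
    by (rule sfun_le_of_opideal_at_blocks[OF assms(2,1) \<open>T \<in> opideal S\<close>]) (rule that)
  show ?thesis
  proof (intro exI[of _ "C1 + C2 + 1"] exI[of _ "max k1 k2 + 1"] conjI allI impI)
    show "0 < C1 + C2 + 1" using \<open>0 \<le> C1\<close> \<open>0 \<le> C2\<close> by simp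
    show "1 \<le> max k1 k2 + 1" by simp
  next
    fix sXX :: "('a \<Rightarrow> 'a) \<Rightarrow> nat \<Rightarrow> real" and sXY :: "('a \<Rightarrow> 'b) \<Rightarrow> nat \<Rightarrow> real"
      and sYX :: "('b \<Rightarrow> 'a) \<Rightarrow> nat \<Rightarrow> real" and sYY :: "('b \<Rightarrow> 'b) \<Rightarrow> nat \<Rightarrow> real"
      and n j :: nat
    assume "sfun2 sXX sXY sYX sYY" and n: "1 \<le> n" and "j < max k1 k2 + 1"
      and j: "1 \<le> (max k1 k2 + 1) * (n - 1) + j"
    then have sX: "sfun_single sXX" and sY: "sfun_single sYY"
      and "sfun_comp sXX sYY" "sfun_comp sYY sXX"
      unfolding sfun2_def by blast+
    show "sXX T ((max k1 k2 + 1) * (n - 1) + j) \<le> (C1 + C2 + 1) * sYY S n"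
      by (rule T_le[OF sY sX \<open>sfun_comp sYY sXX\<close> _ _ n j]) (use \<open>0 \<le> C1\<close> in auto)
    show "sYY S ((max k1 k2 + 1) * (n - 1) + j) \<le> (C1 + C2 + 1) * sXX T n"
      by (rule S_le[OF sX sY \<open>sfun_comp sXX sYY\<close> _ _ n j]) (use \<open>0 \<le> C2\<close> in auto)
  qed
qed

end
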